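(* Let $p\ge 1$, let $\mathcal{T}$ be any set of $n$ tasks with latent wait times $t_1,\dots,t_n\ge 0$, and let $\pi$ be any tour of $\mathcal{T}$ starting at the vehicle start point $x_s$. Then \[ l(\pi)\le \Big(Q\,(p+1)\,c^p(\pi)^p\Big)^{\frac{1}{p+1}}. \]
   Context: A single vehicle moves at unit speed (so distances equal travel times). All tasks, and the vehicle start point $x_s$, lie in a connected planar region $\mathcal{E}\subset\mathbb{R}^2$; $Q'$ denotes the maximum Euclidean distance between any two of these points, $\bar s>0$ is the expected service time of a task, and $Q=Q'+\bar s$. A task $\tau_i$ has a location $x_i\in\mathcal{E}$ and a latent wait time $t_i\ge 0$ (time it has already waited when the tour is planned). A tour $\pi=(x_s,\tau_1,\dots,\tau_n)$ is an ordering in which every task of $\mathcal{T}$ is visited exactly once, starting from $x_s$; writing $x_0=x_s$ and indexing tasks in tour order, let $l_j=\|x_j-x_{j-1}\|$ for $j=1,\dots,n$ and $l(\pi)=\sum_{j=1}^n l_j$ (the length of $\pi$). For $p\ge1$ the cost of $\pi$ is \[ c^p(\pi)=\Big(\sum_{i=1}^n\Big(t_i+\sum_{j=1}^i l_j\Big)^p\Big)^{1/p}. \] *)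

theory Defs
  imports "HOL-Analysis.Analysis"
begin

type_synonym point = "real ^ 2"

text \<open>Tasks are indexed 1..n, with locations y i and latent wait times w i.
  A tour is a bijection ord of {1..n}: the k-th visited task is ord k.\<close>

definition tour_pos :: "point \<Rightarrow> (nat \<Rightarrow> point) \<Rightarrow> (nat \<Rightarrow> nat) \<Rightarrow> nat \<Rightarrow> point" where
  "tour_pos xs y ord k = (if k = 0 then xs else y (ord k))"

definition leg :: "point \<Rightarrow> (nat \<Rightarrow> point) \<Rightarrow> (nat \<Rightarrow> nat) \<Rightarrow> nat \<Rightarrow> real" where
  "leg xs y ord j = dist (tour_pos xs y ord j) (tour_pos xs y ord (j - 1))"

definition tour_length :: "point \<Rightarrow> (nat \<Rightarrow> point) \<Rightarrow> (nat \<Rightarrow> nat) \<Rightarrow> nat \<Rightarrow> real" where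
  "tour_length xs y ord n = (\<Sum>j=1..n. leg xs y ord j)"

definition tour_cost :: "real \<Rightarrow> point \<Rightarrow> (nat \<Rightarrow> point) \<Rightarrow> (nat \<Rightarrow> real) \<Rightarrow> (nat \<Rightarrow> nat) \<Rightarrow> nat \<Rightarrow> real" where
  "tour_cost p xs y w ord n =
     (\<Sum>i=1..n. (w (ord i) + (\<Sum>j=1..i. leg xs y ord j)) powr p) powr (1 / p)"

definition Qprime :: "point \<Rightarrow> (nat \<Rightarrow> point) \<Rightarrow> nat \<Rightarrow> real" where
  "Qprime xs y n = Max {dist a b | a b. a \<in> insert xs (y ` {1..n}) \<and> b \<in> insert xs (y ` {1..n})}"

end

theory Submission imports Defs begin

text \<open>Let S_i = l_1 + ... + l_i be the distance travelled up to the i-th task. By the mean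
  value theorem S_i^(p+1) - S_(i-1)^(p+1) \<le> (p+1) S_i^p l_i, and every leg is at most Q' \<le> Q.\<close>

lemma powr_plus_one_diff_le:
  fixes a b p :: real
  assumes "0 \<le> a" "a \<le> b" "0 \<le> p"
  shows "b powr (p + 1) - a powr (p + 1) \<le> (p + 1) * b powr p * (b - a)"
proof (cases "a = 0 \<or> a = b")
  case True
  have "b powr (p + 1) = b powr p * b"
    using assms by (simp add: powr_add)
  then show ?thesis
    using True assms by (auto simp: algebra_simps)
next
  case False
  with assms have "0 < a" "a < b" by auto
  have deriv: "((\<lambda>z. z powr (p + 1)) has_real_derivative (p + 1) * x powr p) (at x)"
    if "a \<le> x" "x \<le> b" for x
    using has_real_derivative_powr[of x "p + 1"] \<open>0 < a\<close> that by simp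
  obtain z where "a < z" "z < b"
    and mvt: "b powr (p + 1) - a powr (p + 1) = (b - a) * ((p + 1) * z powr p)"
    using MVT2[OF \<open>a < b\<close> deriv] by blast
  have "z powr p \<le> b powr p"
    using \<open>a < z\<close> \<open>z < b\<close> assms by (intro powr_mono2) auto
  then show ?thesis
    unfolding mvt using \<open>a < b\<close> assms
    by (simp add: mult_left_mono mult.commute mult.left_commute)
qed

lemma sum_powr_plus_one_le_partial_sums:
  fixes f :: "nat \<Rightarrow> real" and K p :: real
  assumes "0 \<le> p" and f_bounds: "\<And>j. j \<in> {1..m} \<Longrightarrow> 0 \<le> f j \<and> f j \<le> K"
  shows "(\<Sum>j=1..m. f j) powr (p + 1) \<le> (p + 1) * K * (\<Sum>i=1..m. (\<Sum>j=1..i. f j) powr p)"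
  using f_bounds
proof (induction m)
  case 0
  then show ?case by simp
next
  case (Suc m)
  define a where "a = (\<Sum>j=1..m. f j)"
  define b where "b = (\<Sum>j=1..Suc m. f j)"
  have f_Suc: "0 \<le> f (Suc m)" "f (Suc m) \<le> K"
    using Suc.prems by auto
  have "0 \<le> a"
    unfolding a_def using Suc.prems by (intro sum_nonneg) auto
  have "b = a + f (Suc m)"
    unfolding a_def b_def by simp
  have "b powr (p + 1) \<le> a powr (p + 1) + (p + 1) * b powr p * f (Suc m)"
    using powr_plus_one_diff_le[of a b p] \<open>0 \<le> a\<close> f_Suc \<open>b = a + f (Suc m)\<close> assms(1) by simp
  also have "\<dots> \<le> a powr (p + 1) + (p + 1) * K * b powr p"
    using mult_left_mono[OF f_Suc(2), of "(p + 1) * b powr p"] assms(1) by (simp add: mult_ac)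
  also have "a powr (p + 1) \<le> (p + 1) * K * (\<Sum>i=1..m. (\<Sum>j=1..i. f j) powr p)"
    unfolding a_def using Suc by auto
  finally show ?case
    unfolding b_def by (simp add: distrib_left)
qed

lemma dist_le_Qprime:
  assumes "a \<in> insert xs (y ` {1..n})" "b \<in> insert xs (y ` {1..n})"
  shows "dist a b \<le> Qprime xs y n"
  unfolding Qprime_def using assms by (intro Max_ge finite_image_set2) auto

lemma Qprime_nonneg: "0 \<le> Qprime xs y n"
  using dist_le_Qprime[where a = xs and b = xs] by simp

lemma leg_le_Qprime:
  assumes "\<forall>i\<in>{1..n}. ord i \<in> {1..n}" "j \<in> {1..n}"
  shows "leg xs y ord j \<le> Qprime xs y n"
proof -
  have tour_pos_in: "tour_pos xs y ord k \<in> insert xs (y ` {1..n})" if "k \<le> n" for k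
    unfolding tour_pos_def using assms(1) that by auto
  show ?thesis
    unfolding leg_def using assms(2) by (intro dist_le_Qprime tour_pos_in) auto
qed

lemma tour_cost_powr:
  assumes "p \<noteq> 0"
  shows "tour_cost p xs y w ord n powr p
           = (\<Sum>i=1..n. (w (ord i) + (\<Sum>j=1..i. leg xs y ord j)) powr p)"
  unfolding tour_cost_def using assms by (simp add: powr_powr sum_nonneg)

theorem lemma1:
  fixes E :: "point set" and xs :: point and y :: "nat \<Rightarrow> point"
    and w :: "nat \<Rightarrow> real" and ord :: "nat \<Rightarrow> nat"
    and n :: nat and p sbar :: real
  assumes "connected E"
    and "xs \<in> E" and "\<forall>i\<in>{1..n}. y i \<in> E"
    and "\<forall>i\<in>{1..n}. w i \<ge> 0"
    and "sbar > 0"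
    and "p \<ge> 1"
    and "bij_betw ord {1..n} {1..n}"
  shows "tour_length xs y ord n
           \<le> ((Qprime xs y n + sbar) * (p + 1) * (tour_cost p xs y w ord n) powr p) powr (1 / (p + 1))"
proof -
  define K where "K = Qprime xs y n + sbar"
  define S where "S i = (\<Sum>j=1..i. leg xs y ord j)" for i
  have ord_into: "\<forall>i\<in>{1..n}. ord i \<in> {1..n}"
    using bij_betwE[OF assms(7)] by blast
  have leg_bounds: "0 \<le> leg xs y ord j \<and> leg xs y ord j \<le> K" if "j \<in> {1..n}" for j
    using leg_le_Qprime[OF ord_into that, where xs = xs and y = y] \<open>sbar > 0\<close>
    unfolding K_def by (simp add: leg_def)
  have S_nonneg: "0 \<le> S i" for i
    unfolding S_def leg_def by (simp add: sum_nonneg)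
  have "S n powr (p + 1) \<le> (p + 1) * K * (\<Sum>i=1..n. S i powr p)"
    unfolding S_def using assms(6) leg_bounds by (intro sum_powr_plus_one_le_partial_sums) auto
  also have "\<dots> \<le> (p + 1) * K * (\<Sum>i=1..n. (w (ord i) + S i) powr p)"
    using assms(4,6) ord_into S_nonneg Qprime_nonneg[of xs y n] \<open>sbar > 0\<close>
    unfolding K_def by (intro mult_left_mono sum_mono powr_mono2) auto
  also have "\<dots> = K * (p + 1) * tour_cost p xs y w ord n powr p"
    unfolding S_def using assms(6) by (simp add: tour_cost_powr)
  finally have "(S n powr (p + 1)) powr (1 / (p + 1))
                  \<le> (K * (p + 1) * tour_cost p xs y w ord n powr p) powr (1 / (p + 1))"
    using assms(6) S_nonneg by (intro powr_mono2) auto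
  then show ?thesis
    unfolding tour_length_def K_def S_def[symmetric] using assms(6) S_nonneg[of n]
    by (simp add: powr_powr)
qed

end
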